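(* Let a document collection $\mathcal{D}$ be partitioned into $n$ pairwise disjoint shards $D_1,\dots,D_n$, and let $r\ge1$ identical replicas of this partition be stored, each of the $nr$ shard replicas on its own node. Fix a query $q$ with a unique relevant document $d_q$, where $d_q$ is stored in $D_j$ with probability $p(j)$, $\sum_{j=1}^n p(j)=1$. Each node independently fails to respond with probability $f\in[0,1]$, independently of the location of $d_q$. The success probability of a selection of shard replicas is the probability that $d_q$ lies in a shard of which some selected replica responds. The rSmartRed selection assigns to the $i$-th replica of shard $D_j$ ($1\le i\le r$, $1\le j\le n$) the score $f^{i-1}p(j)$ and selects the $tr$ shard replicas with the highest scores (querying shard $D_j$ at as many replicas as the number of its selected pairs $(j,i)$). Then for every integer $tr$ with $1\le tr\le nr$, the rSmartRed selection of $tr$ shard replicas maximizes the success probability among all selections of $tr$ shard replicas.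
   Context: Distributed search model: each node searches only its own shard replica; the query is sent to the selected replicas, and results of nodes that fail to respond are dropped. Here $t$ and $r$ are positive integers and $tr$ is the budget of shard replicas to select. *)

theory Defs
  imports Complex_Main "HOL-Library.FuncSet"
begin

text \<open>Shard replicas (nodes) are pairs (j, i): the i-th replica of shard D_j,
  with 1 \<le> j \<le> n and 1 \<le> i \<le> r.\<close>
definition nodes :: "nat \<Rightarrow> nat \<Rightarrow> (nat \<times> nat) set" where
  "nodes n r = {1..n} \<times> {1..r}"

definition outcome_prob :: "nat \<Rightarrow> nat \<Rightarrow> real \<Rightarrow> (nat \<times> nat \<Rightarrow> bool) \<Rightarrow> real" where
  "outcome_prob n r f w = (\<Prod>x\<in>nodes n r. if w x then 1 - f else f)"

definition success_prob ::
  "nat \<Rightarrow> nat \<Rightarrow> (nat \<Rightarrow> real) \<Rightarrow> real \<Rightarrow> (nat \<times> nat) set \<Rightarrow> real" where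
  "success_prob n r p f S =
     (\<Sum>j\<in>{1..n}. p j *
        (\<Sum>w\<in>PiE (nodes n r) (\<lambda>_. UNIV :: bool set).
           outcome_prob n r f w *
           (if \<exists>x\<in>S. fst x = j \<and> w x then 1 else 0)))"

definition score :: "(nat \<Rightarrow> real) \<Rightarrow> real \<Rightarrow> nat \<times> nat \<Rightarrow> real" where
  "score p f x = f ^ (snd x - 1) * p (fst x)"

definition rSmartRed_selection ::
  "nat \<Rightarrow> nat \<Rightarrow> (nat \<Rightarrow> real) \<Rightarrow> real \<Rightarrow> nat \<Rightarrow> (nat \<times> nat) set \<Rightarrow> bool" where
  "rSmartRed_selection n r p f k S \<longleftrightarrow>
     S \<subseteq> nodes n r \<and> card S = k \<and>
     (\<forall>x\<in>S. \<forall>y\<in>nodes n r - S. score p f y \<le> score p f x)"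

end

theory Submission
  imports Defs
begin

text \<open>A selection querying c_j replicas of shard D_j succeeds with probability
  \<Sum>_j p j (1 - f^c_j), and 1 - f^c = (1 - f)(1 + f + ... + f^(c-1)). So the success
  probability of a selection equals (1 - f) times the total score of the equally large
  selection that queries the first c_j replicas of each shard instead, and is at least (1 - f)
  times its own total score. As rSmartRed maximizes the total score among selections of its
  size, it maximizes the success probability.\<close>

lemma sum_PiE_bool_prod:
  assumes "finite N"
  shows "(\<Sum>w\<in>PiE N (\<lambda>_. UNIV :: bool set). \<Prod>x\<in>N. g x (w x))
    = (\<Prod>x\<in>N. g x True + g x False :: 'a :: comm_semiring_1)"
  using assms by (subst prod_sum_PiE[symmetric]) (auto simp: UNIV_bool add.commute)

lemma prob_all_fail:
  fixes f :: real
  assumes "finite N" "B \<subseteq> N"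
  shows "(\<Sum>w\<in>PiE N (\<lambda>_. UNIV :: bool set). (\<Prod>x\<in>N. if w x then 1 - f else f) *
           (\<Prod>x\<in>N. if x \<in> B \<and> w x then 0 else 1)) = f ^ card B"
proof -
  have "(\<Sum>w\<in>PiE N (\<lambda>_. UNIV :: bool set). (\<Prod>x\<in>N. if w x then 1 - f else f) *
           (\<Prod>x\<in>N. if x \<in> B \<and> w x then 0 else 1))
      = (\<Prod>x\<in>N. if x \<in> B then f else 1)"
    unfolding prod.distrib[symmetric] using assms(1)
    by (subst sum_PiE_bool_prod) (auto intro: prod.cong)
  also have "\<dots> = f ^ card B"
    using assms by (simp add: prod.If_cases Int_absorb1)
  finally show ?thesis .
qed

lemma prob_some_responds:
  fixes f :: real
  assumes "finite N" "B \<subseteq> N"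
  shows "(\<Sum>w\<in>PiE N (\<lambda>_. UNIV :: bool set). (\<Prod>x\<in>N. if w x then 1 - f else f) *
           (if \<exists>x\<in>B. w x then 1 else 0)) = 1 - f ^ card B"
proof -
  have "(if \<exists>x\<in>B. w x then 1 else 0)
      = 1 - (\<Prod>x\<in>N. if x \<in> B \<and> w x then 0 else 1 :: real)"
    for w
    using assms by (auto intro: prod.neutral)
  then show ?thesis
    using prob_all_fail[OF assms] prob_all_fail[of N "{}" f] assms(1)
    by (simp add: right_diff_distrib sum_subtractf)
qed

lemma subset_nodes_eq_Sigma_rows:
  assumes "X \<subseteq> nodes n r"
  shows "X = (SIGMA j:{1..n}. X `` {j})"
  using assms by (auto simp: nodes_def)

lemma row_subset_replicas:
  assumes "X \<subseteq> nodes n r"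
  shows "X `` {j} \<subseteq> {1..r}"
  using assms by (auto simp: nodes_def)

lemma success_prob_eq_rows:
  assumes "X \<subseteq> nodes n r"
  shows "success_prob n r p f X = (\<Sum>j\<in>{1..n}. p j * (1 - f ^ card (X `` {j})))"
  unfolding success_prob_def
proof (intro sum.cong refl arg_cong[where f = "(*) (p _)"])
  fix j
  have event: "(\<exists>x\<in>X. fst x = j \<and> w x) \<longleftrightarrow> (\<exists>x\<in>Pair j ` (X `` {j}). w x)" for w :: "_ \<Rightarrow> bool"
    by force
  have "Pair j ` (X `` {j}) \<subseteq> nodes n r"
    using assms by auto
  moreover have "card (Pair j ` (X `` {j})) = card (X `` {j})"
    by (simp add: card_image inj_on_def)
  ultimately show "(\<Sum>w\<in>PiE (nodes n r) (\<lambda>_. UNIV). outcome_prob n r f w *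
           (if \<exists>x\<in>X. fst x = j \<and> w x then 1 else 0)) = 1 - f ^ card (X `` {j})"
    unfolding event outcome_prob_def
    using prob_some_responds[of "nodes n r" "Pair j ` (X `` {j})" f] by (simp add: nodes_def)
qed

lemma one_minus_power_eq_sum_from_1:
  fixes f :: "'a :: comm_ring_1"
  shows "1 - f ^ c = (1 - f) * (\<Sum>i\<in>{1..c}. f ^ (i - 1))"
  by (simp add: one_diff_power_eq sum.atLeast1_atMost_eq)

lemma sum_score_eq_rows:
  assumes "X \<subseteq> nodes n r"
  shows "sum (score p f) X = (\<Sum>j\<in>{1..n}. p j * (\<Sum>i\<in>X `` {j}. f ^ (i - 1)))"
proof -
  have "sum (score p f) X = (\<Sum>j\<in>{1..n}. \<Sum>i\<in>X `` {j}. score p f (j, i))"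
    using finite_subset[OF row_subset_replicas[OF assms]]
    by (subst subset_nodes_eq_Sigma_rows[OF assms], subst sum.Sigma) auto
  then show ?thesis
    by (simp add: score_def sum_distrib_left mult.commute)
qed

lemma sum_le_sum_of_top_subset:
  fixes g :: "'a \<Rightarrow> 'b :: ordered_comm_monoid_add"
  assumes "finite U" "A \<subseteq> U" "B \<subseteq> U" "card B = card A"
    and top: "\<And>x y. x \<in> A \<Longrightarrow> y \<in> U - A \<Longrightarrow> g y \<le> g x"
  shows "sum g B \<le> sum g A"
proof -
  have fin: "finite A" "finite B"
    using assms(1-3) finite_subset by auto
  then have "card (B - A) = card (A - B)"
    using assms(4) by (simp add: card_Diff_subset_Int Int_commute)
  then obtain h where h: "bij_betw h (B - A) (A - B)"
    using fin finite_same_card_bij by blast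
  have "sum g (B - A) \<le> (\<Sum>y\<in>B - A. g (h y))"
    using h assms(3) by (intro sum_mono top) (auto dest: bij_betwE)
  also have "\<dots> = sum g (A - B)"
    using sum.reindex_bij_betw[OF h] .
  finally have "sum g (A \<inter> B) + sum g (B - A) \<le> sum g (A \<inter> B) + sum g (A - B)"
    by (rule add_left_mono)
  then show ?thesis
    using sum.Int_Diff[OF fin(1), of g B] sum.Int_Diff[OF fin(2), of g A]
    by (simp add: Int_commute)
qed

lemma sum_power_pred_le_initial_segment:
  fixes f :: real
  assumes "0 \<le> f" "f \<le> 1" "finite B" "0 \<notin> B"
  shows "(\<Sum>i\<in>B. f ^ (i - 1)) \<le> (\<Sum>i\<in>{1..card B}. f ^ (i - 1))"
proof (rule sum_le_sum_of_top_subset[where U = "B \<union> {1..card B}"])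
  fix x y assume "x \<in> {1..card B}" "y \<in> B \<union> {1..card B} - {1..card B}"
  then have "x - 1 \<le> y - 1"
    using assms(4) by (cases y) auto
  then show "f ^ (y - 1) \<le> f ^ (x - 1)"
    using assms(1,2) by (rule power_decreasing)
qed (use assms(3) in auto)

definition first_replicas :: "nat \<Rightarrow> (nat \<times> nat) set \<Rightarrow> (nat \<times> nat) set" where
  "first_replicas n X = (SIGMA j:{1..n}. {1..card (X `` {j})})"

lemma first_replicas_subset_nodes:
  assumes "X \<subseteq> nodes n r"
  shows "first_replicas n X \<subseteq> nodes n r"
proof -
  have "card (X `` {j}) \<le> r" for j
    using card_mono[OF _ row_subset_replicas[OF assms]] by simp
  then show ?thesis
    by (auto simp: first_replicas_def nodes_def) (use le_trans in blast)
qed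

lemma card_first_replicas:
  assumes "X \<subseteq> nodes n r"
  shows "card (first_replicas n X) = card X"
  using finite_subset[OF row_subset_replicas[OF assms]]
  by (subst (2) subset_nodes_eq_Sigma_rows[OF assms]) (simp add: first_replicas_def card_SigmaI)

lemma success_prob_eq_sum_score_first_replicas:
  assumes "X \<subseteq> nodes n r"
  shows "success_prob n r p f X = (1 - f) * sum (score p f) (first_replicas n X)"
proof -
  have "first_replicas n X `` {j} = {1..card (X `` {j})}" if "j \<in> {1..n}" for j
    using that by (auto simp: first_replicas_def)
  then show ?thesis
    unfolding success_prob_eq_rows[OF assms]
      sum_score_eq_rows[OF first_replicas_subset_nodes[OF assms]]
    by (simp add: one_minus_power_eq_sum_from_1 sum_distrib_left algebra_simps)
qed

lemma sum_score_le_success_prob: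
  assumes "X \<subseteq> nodes n r" "\<And>j. j \<in> {1..n} \<Longrightarrow> p j \<ge> 0" "0 \<le> f" "f \<le> 1"
  shows "(1 - f) * sum (score p f) X \<le> success_prob n r p f X"
proof -
  have "p j * (\<Sum>i\<in>X `` {j}. f ^ (i - 1)) \<le> p j * (\<Sum>i\<in>{1..card (X `` {j})}. f ^ (i - 1))"
    if "j \<in> {1..n}" for j
    using row_subset_replicas[OF assms(1)] finite_subset
    by (intro mult_left_mono sum_power_pred_le_initial_segment assms(2-4) that) fastforce+
  then have "sum (score p f) X \<le> (\<Sum>j\<in>{1..n}. p j * (\<Sum>i\<in>{1..card (X `` {j})}. f ^ (i - 1)))"
    unfolding sum_score_eq_rows[OF assms(1)] by (rule sum_mono)
  from mult_left_mono[OF this, of "1 - f"] show ?thesis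
    using assms(4) unfolding success_prob_eq_rows[OF assms(1)]
    by (simp add: one_minus_power_eq_sum_from_1 sum_distrib_left algebra_simps)
qed

theorem theorem1:
  fixes n r t :: nat and p :: "nat \<Rightarrow> real" and f :: real
    and S T :: "(nat \<times> nat) set"
  assumes "r \<ge> 1" and "t \<ge> 1"
    and "\<And>j. j \<in> {1..n} \<Longrightarrow> p j \<ge> 0"
    and "(\<Sum>j\<in>{1..n}. p j) = 1"
    and "0 \<le> f" and "f \<le> 1"
    and "1 \<le> t * r" and "t * r \<le> n * r"
    and "rSmartRed_selection n r p f (t * r) S"
    and "T \<subseteq> nodes n r" and "card T = t * r"
  shows "success_prob n r p f T \<le> success_prob n r p f S"
proof -
  have S: "S \<subseteq> nodes n r" "card S = t * r"
    and S_top: "\<And>x y. x \<in> S \<Longrightarrow> y \<in> nodes n r - S \<Longrightarrow> score p f y \<le> score p f x"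
    using assms(9) unfolding rSmartRed_selection_def by auto
  have "success_prob n r p f T = (1 - f) * sum (score p f) (first_replicas n T)"
    using assms(10) by (rule success_prob_eq_sum_score_first_replicas)
  also have "\<dots> \<le> (1 - f) * sum (score p f) S"
  proof (intro mult_left_mono sum_le_sum_of_top_subset[OF _ S(1)] S_top)
    show "finite (nodes n r)" by (simp add: nodes_def)
    show "first_replicas n T \<subseteq> nodes n r" "card (first_replicas n T) = card S"
      using assms(10,11) S(2) by (simp_all add: first_replicas_subset_nodes card_first_replicas)
  qed (use assms(6) in auto)
  also have "\<dots> \<le> success_prob n r p f S"
    using S(1) assms(3,5,6) by (rule sum_score_le_success_prob)
  finally show ?thesis .
qed

end
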